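(* Let $\epsilon>0$, let $\mathbb G$ be the (augmented) natural filtration of $W$ and $\mathbb F=(\mathcal F_t)_{t\ge0}$ with $\mathcal F_t=\mathcal G_{t-\epsilon}$ (where $\mathcal G_s:=\mathcal G_0$ for $s<0$). Then there is no probability measure $Q\sim P$ under which the optional projection ${}^oM$ of $M$ into $\mathbb F$ is a $(Q,\mathbb F)$-local martingale, i.e. $\mathcal M_{loc}({}^oM,\mathbb F)=\emptyset$.
   Context: $B^1,B^2,B^3$ are independent standard Brownian motions on $(\Omega,\mathcal F,P)$ with $(B^1_0,B^2_0,B^3_0)=(1,0,0)$, $M_t:=((B^1_t)^2+(B^2_t)^2+(B^3_t)^2)^{-1/2}$, and $W_t:=\int_0^tM_s(B^1_sdB^1_s+B^2_sdB^2_s+B^3_sdB^3_s)$, a one-dimensional Brownian motion; $dM_t=-M_t^2dW_t$. ${}^oM_t=\mathbb E^P[M_t\mid\mathcal F_t]$ (càdlàg version). For a process $Y$ and filtration $\mathbb H$, $\mathcal M_{loc}(Y,\mathbb H)$ is the set of probability measures $Q\sim P$ (on $(\Omega,\mathcal G_\infty)$) such that $Y$ is a $(Q,\mathbb H)$-local martingale. *)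

theory Defs
  imports "HOL-Probability.Probability"
begin

definition brownian_motion :: "'a measure \<Rightarrow> (real \<Rightarrow> 'a \<Rightarrow> real) \<Rightarrow> real \<Rightarrow> bool" where
  "brownian_motion P X x \<longleftrightarrow>
     (\<forall>t\<ge>0. X t \<in> borel_measurable P) \<and>
     (AE \<omega> in P. X 0 \<omega> = x) \<and>
     (AE \<omega> in P. continuous_on {0..} (\<lambda>t. X t \<omega>)) \<and>
     (\<forall>s t. 0 \<le> s \<and> s < t \<longrightarrow>
        distributed P lborel (\<lambda>\<omega>. X t \<omega> - X s \<omega>) (\<lambda>y. ennreal (normal_density 0 (sqrt (t - s)) y))) \<and>
     (\<forall>(n::nat) (\<tau>::nat \<Rightarrow> real). 0 \<le> \<tau> 0 \<and> strict_mono \<tau> \<longrightarrow>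
        prob_space.indep_vars P (\<lambda>_. borel) (\<lambda>i \<omega>. X (\<tau> (Suc i)) \<omega> - X (\<tau> i) \<omega>) {..<n})"

definition aug_nat_filtration :: "'a measure \<Rightarrow> (real \<Rightarrow> 'a \<Rightarrow> real) \<Rightarrow> real \<Rightarrow> 'a measure" where
  "aug_nat_filtration P Y t = sigma (space P)
     ({Y s -` A \<inter> space P | s A. 0 \<le> s \<and> s \<le> max t 0 \<and> A \<in> sets borel} \<union> null_sets P)"

definition filtration_infty :: "'a measure \<Rightarrow> (real \<Rightarrow> 'a measure) \<Rightarrow> 'a measure" where
  "filtration_infty P G = sigma (space P) (\<Union>t. sets (G t))"

definition equiv_prob_on :: "'a measure \<Rightarrow> 'a measure \<Rightarrow> 'a measure \<Rightarrow> bool" where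
  "equiv_prob_on Q P H \<longleftrightarrow> prob_space Q \<and> space Q = space P \<and> sets Q = sets H \<and>
     (\<forall>A\<in>sets H. emeasure Q A = 0 \<longleftrightarrow> emeasure P A = 0)"

definition is_martingale :: "'a measure \<Rightarrow> (real \<Rightarrow> 'a measure) \<Rightarrow> (real \<Rightarrow> 'a \<Rightarrow> real) \<Rightarrow> bool" where
  "is_martingale Q F X \<longleftrightarrow>
     (\<forall>t\<ge>0. X t \<in> borel_measurable (F t) \<and> integrable Q (X t)) \<and>
     (\<forall>s t. 0 \<le> s \<and> s \<le> t \<longrightarrow>
        (\<forall>A\<in>sets (F s). (\<integral>\<omega>. indicator A \<omega> * X t \<omega> \<partial>Q) = (\<integral>\<omega>. indicator A \<omega> * X s \<omega> \<partial>Q)))"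

definition is_local_martingale :: "'a measure \<Rightarrow> (real \<Rightarrow> 'a measure) \<Rightarrow> (real \<Rightarrow> 'a \<Rightarrow> real) \<Rightarrow> bool" where
  "is_local_martingale Q F X \<longleftrightarrow>
     (\<exists>\<tau> :: nat \<Rightarrow> 'a \<Rightarrow> real.
        (\<forall>n. stopping_time F (\<tau> n) \<and> (\<forall>\<omega>\<in>space Q. 0 \<le> \<tau> n \<omega>)) \<and>
        (AE \<omega> in Q. mono (\<lambda>n. \<tau> n \<omega>) \<and> filterlim (\<lambda>n. \<tau> n \<omega>) at_top sequentially) \<and>
        (\<forall>n. is_martingale Q F (\<lambda>t \<omega>. X (min t (\<tau> n \<omega>)) \<omega>)))"

definition cadlag :: "(real \<Rightarrow> real) \<Rightarrow> bool" where
  "cadlag f \<longleftrightarrow> (\<forall>t\<ge>0. continuous (at_right t) f) \<and> (\<forall>t>0. \<exists>l. (f \<longlongrightarrow> l) (at_left t))"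

definition optional_projection :: "'a measure \<Rightarrow> (real \<Rightarrow> 'a measure) \<Rightarrow> (real \<Rightarrow> 'a \<Rightarrow> real) \<Rightarrow> (real \<Rightarrow> 'a \<Rightarrow> real) \<Rightarrow> bool" where
  "optional_projection P F X Y \<longleftrightarrow>
     (\<forall>t\<ge>0. Y t \<in> borel_measurable (F t)) \<and>
     (AE \<omega> in P. cadlag (\<lambda>t. Y t \<omega>)) \<and>
     (\<forall>t\<ge>0. AE \<omega> in P. Y t \<omega> = real_cond_exp P (F t) (X t) \<omega>)"

end

theory Submission
  imports Defs
begin

(* For t <= eps the sigma-algebra F t = G 0 is P-trivial, because W starts at 0, so the optional
   projection is deterministic there: oM 0 = E M 0 = 1 and oM eps = E M eps. Triviality carries over to
   every Q equivalent to P on G_oo. Hence each localising time of a (Q, F)-local martingale exceeds eps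
   either almost surely or almost never, and as these times tend to infinity, some stopped process is a
   Q-martingale agreeing with oM at 0 and eps, which would force E M eps = 1. But 3-dimensional
   Brownian motion started at distance 1 has E M eps < 1: writing
   1/r = (2/sqrt pi) int_0^oo exp(-s^2 r^2) ds and integrating the Gaussians first gives
   E M eps = (2/sqrt pi) int_0^(1/sqrt(2 eps)) exp(-u^2) du < 1. *)

section \<open>Gaussian integrals\<close>

lemma nn_integral_exp_neg_square_Ici:
  "(\<integral>\<^sup>+x. ennreal (exp (- x\<^sup>2)) * indicator {0..} x \<partial>lborel) = ennreal (sqrt pi / 2)"
proof -
  have hb: "has_bochner_integral lborel (\<lambda>x. indicator {0..} x *\<^sub>R exp (- x\<^sup>2)) (sqrt pi / 2)"
    by (rule gaussian_moment_0)
  have "(\<integral>\<^sup>+x. ennreal (indicator {0..} x *\<^sub>R exp (- x\<^sup>2)) \<partial>lborel)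
        = ennreal (\<integral>x. indicator {0..} x *\<^sub>R exp (- x\<^sup>2) \<partial>lborel)"
    by (rule nn_integral_eq_integral[OF integrable.intros[OF hb]]) auto
  also have "(\<integral>x. indicator {0..} x *\<^sub>R exp (- x\<^sup>2) \<partial>lborel) = sqrt pi / 2"
    using hb by (rule has_bochner_integral_integral_eq)
  finally show ?thesis
    by (simp add: indicator_mult_ennreal mult.commute)
qed

lemma inverse_sqrt_eq_nn_integral_exp:
  fixes q :: real
  assumes "q > 0"
  shows "ennreal (1 / sqrt q)
    = ennreal (2 / sqrt pi) * (\<integral>\<^sup>+s. ennreal (exp (- (s\<^sup>2 * q))) * indicator {0..} s \<partial>lborel)"
proof -
  define r where "r = sqrt q"
  have r: "r > 0" "r\<^sup>2 = q" using assms by (auto simp: r_def)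
  let ?f = "\<lambda>u::real. ennreal (exp (- u\<^sup>2)) * indicator {0..} u"
  have "(\<integral>\<^sup>+u. ?f u \<partial>lborel) = \<bar>r\<bar> * (\<integral>\<^sup>+s. ?f (0 + r * s) \<partial>lborel)"
    by (rule nn_integral_real_affine) (use r in auto)
  also have "(\<lambda>s. ?f (0 + r * s)) = (\<lambda>s. ennreal (exp (- (s\<^sup>2 * q))) * indicator {0..} s)"
    using r by (auto simp: fun_eq_iff indicator_def zero_le_mult_iff power_mult_distrib mult.commute)
  finally have "ennreal (sqrt pi / 2)
      = ennreal r * (\<integral>\<^sup>+s. ennreal (exp (- (s\<^sup>2 * q))) * indicator {0..} s \<partial>lborel)"
    using r by (simp add: nn_integral_exp_neg_square_Ici)
  then have "ennreal (2 / sqrt pi) * (\<integral>\<^sup>+s. ennreal (exp (- (s\<^sup>2 * q))) * indicator {0..} s \<partial>lborel)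
      = ennreal (2 / sqrt pi) * ennreal (1 / r) * ennreal (sqrt pi / 2)"
    using r by (simp add: ennreal_mult'[symmetric] mult.assoc[symmetric])
  also have "\<dots> = ennreal (1 / r)"
    using r by (simp add: ennreal_mult'[symmetric])
  finally show ?thesis by (simp add: r_def)
qed

(* The base point -1 only has to lie below 0, so that 0 is an interior point where the FTC applies. *)
definition gauss_primitive :: "real \<Rightarrow> real" where
  "gauss_primitive x = integral {-1..x} (\<lambda>u. exp (- u\<^sup>2))"

lemma has_real_derivative_gauss_primitive:
  assumes "x > -1"
  shows "(gauss_primitive has_real_derivative exp (- x\<^sup>2)) (at x)"
proof -
  have "continuous_on {-1..x+1} (\<lambda>u::real. exp (- u\<^sup>2))"
    by (intro continuous_intros)
  then have "((\<lambda>y. integral {-1..y} (\<lambda>u. exp (- u\<^sup>2))) has_real_derivative exp (- x\<^sup>2))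
      (at x within {-1..x+1})"
    by (rule integral_has_real_derivative) (use assms in auto)
  moreover have "at x within {-1..x+1} = at x"
    by (rule at_within_interior) (use assms in auto)
  ultimately show ?thesis unfolding gauss_primitive_def[abs_def] by simp
qed

lemma gauss_primitive_strict_mono:
  assumes "-1 < x" "x < y"
  shows "gauss_primitive x < gauss_primitive y"
  using assms by (intro DERIV_pos_imp_increasing[of x y gauss_primitive])
    (auto intro!: exI has_real_derivative_gauss_primitive)

lemma nn_integral_exp_neg_square_Icc:
  assumes "0 \<le> b"
  shows "(\<integral>\<^sup>+x. ennreal (exp (- x\<^sup>2)) * indicator {0..b} x \<partial>lborel)
    = ennreal (gauss_primitive b - gauss_primitive 0)"
  by (rule nn_integral_FTC_Icc) (use assms in \<open>auto intro!: has_real_derivative_gauss_primitive\<close>)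

lemma gauss_primitive_diff_less:
  assumes "0 \<le> b"
  shows "gauss_primitive b - gauss_primitive 0 < sqrt pi / 2"
proof -
  have "ennreal (gauss_primitive (b + 1) - gauss_primitive 0)
      = (\<integral>\<^sup>+x. ennreal (exp (- x\<^sup>2)) * indicator {0..b + 1} x \<partial>lborel)"
    using assms by (simp add: nn_integral_exp_neg_square_Icc)
  also have "\<dots> \<le> (\<integral>\<^sup>+x. ennreal (exp (- x\<^sup>2)) * indicator {0..} x \<partial>lborel)"
    by (intro nn_integral_mono) (auto simp: indicator_def)
  also have "\<dots> = ennreal (sqrt pi / 2)"
    by (rule nn_integral_exp_neg_square_Ici)
  finally have "gauss_primitive (b + 1) - gauss_primitive 0 \<le> sqrt pi / 2"
    using pi_gt_zero by (auto simp: ennreal_le_iff2)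
  moreover have "gauss_primitive b < gauss_primitive (b + 1)"
    using assms by (intro gauss_primitive_strict_mono) auto
  ultimately show ?thesis by linarith
qed

lemma has_real_derivative_div_sqrt_quadratic:
  fixes t x :: real
  assumes "t \<ge> 0"
  shows "((\<lambda>s. s / sqrt (1 + 2 * s\<^sup>2 * t)) has_real_derivative 1 / sqrt (1 + 2 * x\<^sup>2 * t) ^ 3) (at x)"
proof -
  define D where "D = 1 + 2 * x\<^sup>2 * t"
  have "0 \<le> 2 * x\<^sup>2 * t" using assms by simp
  then have D: "D > 0" unfolding D_def by linarith
  define r where "r = sqrt D"
  have r: "r > 0" "r\<^sup>2 = D" using D unfolding r_def by auto
  have "((\<lambda>s. 1 + 2 * s\<^sup>2 * t) has_real_derivative 4 * x * t) (at x)"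
    by (auto intro!: derivative_eq_intros)
  from DERIV_chain2[OF DERIV_real_sqrt[OF D[unfolded D_def]] this]
  have "((\<lambda>s. sqrt (1 + 2 * s\<^sup>2 * t)) has_real_derivative inverse r / 2 * (4 * x * t)) (at x)"
    unfolding r_def D_def by simp
  from DERIV_quotient[OF DERIV_ident this] D
  have "((\<lambda>s. s / sqrt (1 + 2 * s\<^sup>2 * t)) has_real_derivative
      (1 * r - inverse r / 2 * (4 * x * t) * x) / r ^ Suc (Suc 0)) (at x)"
    unfolding r_def D_def by simp
  moreover have "(1 * r - inverse r / 2 * (4 * x * t) * x) / r ^ Suc (Suc 0) = 1 / r ^ 3"
  proof -
    have "1 * r - inverse r / 2 * (4 * x * t) * x = (r\<^sup>2 - 2 * x\<^sup>2 * t) / r"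
      using r by (simp add: field_simps power2_eq_square)
    also have "\<dots> = 1 / r" using r unfolding D_def by simp
    finally show ?thesis using r by (simp add: power2_eq_square power3_eq_cube)
  qed
  ultimately show ?thesis unfolding r_def D_def by simp
qed

lemma tendsto_div_sqrt_quadratic:
  fixes t :: real
  assumes "t > 0"
  shows "((\<lambda>s. s / sqrt (1 + 2 * s\<^sup>2 * t)) \<longlongrightarrow> 1 / sqrt (2 * t)) at_top"
proof -
  have "((\<lambda>s::real. inverse (s\<^sup>2)) \<longlongrightarrow> 0) at_top"
    by (intro tendsto_inverse_0_at_top filterlim_pow_at_top filterlim_ident) auto
  then have "((\<lambda>s::real. 1 / sqrt (inverse (s\<^sup>2) + 2 * t)) \<longlongrightarrow> 1 / sqrt (0 + 2 * t)) at_top"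
    using assms by (intro tendsto_intros) auto
  moreover have ev: "eventually (\<lambda>s. 1 / sqrt (inverse (s\<^sup>2) + 2 * t) = s / sqrt (1 + 2 * s\<^sup>2 * t)) at_top"
    using eventually_gt_at_top[of 0]
  proof eventually_elim
    case (elim s)
    have "inverse (s\<^sup>2) + 2 * t = (1 + 2 * s\<^sup>2 * t) / s\<^sup>2" using elim by (simp add: field_simps)
    then have "sqrt (inverse (s\<^sup>2) + 2 * t) = sqrt (1 + 2 * s\<^sup>2 * t) / s"
      using elim by (simp add: real_sqrt_divide)
    then show ?case using elim by simp
  qed
  ultimately show ?thesis using tendsto_cong[OF ev] by simp
qed

text \<open>The substitution \<open>u = s / sqrt (1 + 2 s\<^sup>2 t)\<close> maps \<open>[0, \<infinity>)\<close> onto \<open>[0, 1 / sqrt (2 t))\<close>.\<close>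

lemma nn_integral_exp_neg_square_substitution:
  fixes t :: real
  assumes t: "t > 0"
  shows "(\<integral>\<^sup>+s. ennreal (exp (- s\<^sup>2 / (1 + 2 * s\<^sup>2 * t)) / sqrt (1 + 2 * s\<^sup>2 * t) ^ 3)
      * indicator {0..} s \<partial>lborel)
    = ennreal (gauss_primitive (1 / sqrt (2 * t)) - gauss_primitive 0)"
proof -
  let ?g = "\<lambda>s. s / sqrt (1 + 2 * s\<^sup>2 * t)"
  have "(\<integral>\<^sup>+s. ennreal (exp (- s\<^sup>2 / (1 + 2 * s\<^sup>2 * t)) / sqrt (1 + 2 * s\<^sup>2 * t) ^ 3)
      * indicator {0..} s \<partial>lborel)
    = ennreal (gauss_primitive (1 / sqrt (2 * t)) - gauss_primitive (?g 0))"
  proof (rule nn_integral_FTC_atLeast)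
    show "(\<lambda>s. exp (- s\<^sup>2 / (1 + 2 * s\<^sup>2 * t)) / sqrt (1 + 2 * s\<^sup>2 * t) ^ 3) \<in> borel_measurable borel"
      by measurable
  next
    fix x :: real
    assume x: "0 \<le> x"
    have "0 \<le> 2 * x\<^sup>2 * t" using t by simp
    then have D: "1 + 2 * x\<^sup>2 * t > 0" by linarith
    have gx: "?g x > -1" using x D by (smt (verit) divide_nonneg_pos real_sqrt_gt_zero)
    have sq: "(?g x)\<^sup>2 = x\<^sup>2 / (1 + 2 * x\<^sup>2 * t)" using D by (simp add: power_divide)
    show "((\<lambda>s. gauss_primitive (?g s)) has_real_derivative
        exp (- x\<^sup>2 / (1 + 2 * x\<^sup>2 * t)) / sqrt (1 + 2 * x\<^sup>2 * t) ^ 3) (at x)"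
      using DERIV_chain2[OF has_real_derivative_gauss_primitive[OF gx]
          has_real_derivative_div_sqrt_quadratic[OF less_imp_le[OF t]]]
      unfolding sq by simp
    show "0 \<le> exp (- x\<^sup>2 / (1 + 2 * x\<^sup>2 * t)) / sqrt (1 + 2 * x\<^sup>2 * t) ^ 3" using D by simp
  next
    have "-1 < 1 / sqrt (2 * t)" using t by (smt (verit) divide_pos_pos real_sqrt_gt_zero)
    then show "((\<lambda>s. gauss_primitive (?g s)) \<longlongrightarrow> gauss_primitive (1 / sqrt (2 * t))) at_top"
      by (intro isCont_tendsto_compose[OF DERIV_isCont[OF has_real_derivative_gauss_primitive]]
          tendsto_div_sqrt_quadratic t)
  qed
  then show ?thesis by simp
qed

text \<open>Completing the square in the exponent.\<close>

lemma normal_density_mult_exp_neg_square: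
  fixes t a x z :: real
  assumes t: "t > 0" and a: "a \<ge> 0"
  defines "D \<equiv> 1 + 2 * a * t"
  shows "normal_density 0 (sqrt t) z * exp (- (a * (x + z)\<^sup>2))
       = exp (- (a * x\<^sup>2) / D) / sqrt D * normal_density (- (2 * a * t * x) / D) (sqrt (t / D)) z"
proof -
  have "0 \<le> 2 * a * t" using t a by simp
  then have D: "D > 0" by (auto simp: D_def)
  have exponent: "- (z - 0)\<^sup>2 / (2 * t) + - (a * (x + z)\<^sup>2)
      = - (a * x\<^sup>2) / D + - (z - (- (2 * a * t * x) / D))\<^sup>2 / (2 * (t / D))"
  proof -
    have num: "D * z\<^sup>2 + 2 * t * D * a * (x + z)\<^sup>2 = 2 * t * a * x\<^sup>2 + (z * D + 2 * a * t * x)\<^sup>2"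
      by (simp add: D_def power2_eq_square algebra_simps)
    have l: "- (z - 0)\<^sup>2 / (2 * t) + - (a * (x + z)\<^sup>2) = - (D * z\<^sup>2 + 2 * t * D * a * (x + z)\<^sup>2) / (2 * t * D)"
      using D t by (simp add: field_simps)
    have r: "- (a * x\<^sup>2) / D + - (z - (- (2 * a * t * x) / D))\<^sup>2 / (2 * (t / D))
        = - (2 * t * a * x\<^sup>2 + (z * D + 2 * a * t * x)\<^sup>2) / (2 * t * D)"
    proof -
      have "z - (- (2 * a * t * x) / D) = (z * D + 2 * a * t * x) / D" using D by (simp add: field_simps)
      then have square: "- (z - (- (2 * a * t * x) / D))\<^sup>2 / (2 * (t / D)) = - (z * D + 2 * a * t * x)\<^sup>2 / (2 * t * D)"
        using D t by (simp add: power_divide field_simps) (simp add: power2_eq_square)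
      have g: "\<And>N. - (a * x\<^sup>2) / D + - N / (2 * t * D) = - (2 * t * a * x\<^sup>2 + N) / (2 * t * D)"
        using D t by (simp add: field_simps)
      show ?thesis unfolding square g ..
    qed
    show ?thesis unfolding l r num ..
  qed
  have s: "sqrt (2 * pi * (t / D)) = sqrt (2 * pi * t) / sqrt D"
    using D t by (simp add: real_sqrt_divide[symmetric])
  have s2: "sqrt (2 * pi * t) = sqrt D * sqrt (2 * pi * t / D)"
    using D by (simp add: real_sqrt_mult[symmetric])
  have "normal_density 0 (sqrt t) z * exp (- (a * (x + z)\<^sup>2))
      = 1 / sqrt (2 * pi * t) * exp (- (z - 0)\<^sup>2 / (2 * t) + - (a * (x + z)\<^sup>2))"
    using t by (simp add: normal_density_def exp_add[symmetric])
  also have "\<dots> = 1 / sqrt (2 * pi * t) * exp (- (a * x\<^sup>2) / D + - (z - (- (2 * a * t * x) / D))\<^sup>2 / (2 * (t / D)))"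
    by (simp only: exponent)
  also have "\<dots> = exp (- (a * x\<^sup>2) / D) / sqrt D * normal_density (- (2 * a * t * x) / D) (sqrt (t / D)) z"
    using t D by (simp add: normal_density_def exp_add[symmetric] s) (rule s2)
  finally show ?thesis .
qed

lemma nn_integral_normal_density:
  assumes "\<sigma> > 0"
  shows "(\<integral>\<^sup>+z. ennreal (normal_density \<mu> \<sigma> z) \<partial>lborel) = 1"
proof -
  have "emeasure (density lborel (normal_density \<mu> \<sigma>)) UNIV = 1"
    using prob_space_normal_density[OF assms] prob_space.emeasure_space_1 by fastforce
  then show ?thesis by (simp add: emeasure_density)
qed

lemma nn_integral_normal_density_mult_exp_neg_square:
  fixes t a x :: real
  assumes t: "t > 0" and a: "a \<ge> 0"
  shows "(\<integral>\<^sup>+z. ennreal (normal_density 0 (sqrt t) z) * ennreal (exp (- (a * (x + z)\<^sup>2))) \<partial>lborel)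
       = ennreal (exp (- (a * x\<^sup>2) / (1 + 2 * a * t)) / sqrt (1 + 2 * a * t))"
proof -
  let ?D = "1 + 2 * a * t"
  have "0 \<le> 2 * a * t" using t a by simp
  then have D: "?D > 0" by linarith
  have "(\<integral>\<^sup>+z. ennreal (normal_density 0 (sqrt t) z) * ennreal (exp (- (a * (x + z)\<^sup>2))) \<partial>lborel)
      = (\<integral>\<^sup>+z. ennreal (exp (- (a * x\<^sup>2) / ?D) / sqrt ?D)
          * ennreal (normal_density (- (2 * a * t * x) / ?D) (sqrt (t / ?D)) z) \<partial>lborel)"
    using normal_density_mult_exp_neg_square[OF t a] D
    by (intro nn_integral_cong) (simp add: ennreal_mult[symmetric])
  also have "\<dots> = ennreal (exp (- (a * x\<^sup>2) / ?D) / sqrt ?D)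
      * (\<integral>\<^sup>+z. ennreal (normal_density (- (2 * a * t * x) / ?D) (sqrt (t / ?D)) z) \<partial>lborel)"
    by (rule nn_integral_cmult) simp
  also have "\<dots> = ennreal (exp (- (a * x\<^sup>2) / ?D) / sqrt ?D)"
    using D t by (simp add: nn_integral_normal_density)
  finally show ?thesis .
qed

section \<open>The inverse distance of three-dimensional Brownian motion\<close>

lemma brownian_motion_borel_measurable:
  "brownian_motion P X x \<Longrightarrow> 0 \<le> t \<Longrightarrow> X t \<in> borel_measurable P"
  unfolding brownian_motion_def by blast

lemma brownian_motion_AE_start:
  "brownian_motion P X x \<Longrightarrow> AE \<omega> in P. X 0 \<omega> = x"
  unfolding brownian_motion_def by blast

lemma brownian_motion_distributed:
  assumes "brownian_motion P X x" "0 < t"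
  shows "distributed P lborel (\<lambda>\<omega>. X t \<omega> - X 0 \<omega>) (\<lambda>y. ennreal (normal_density 0 (sqrt t) y))"
proof -
  have "\<forall>s t. 0 \<le> s \<and> s < t \<longrightarrow> distributed P lborel (\<lambda>\<omega>. X t \<omega> - X s \<omega>)
      (\<lambda>y. ennreal (normal_density 0 (sqrt (t - s)) y))"
    using assms(1) unfolding brownian_motion_def by blast
  then show ?thesis using assms(2) by force
qed

lemma brownian_motion_nn_integral_exp_neg_square:
  assumes bm: "brownian_motion P X x" and t: "t > 0" and a: "a \<ge> 0"
  shows "(\<integral>\<^sup>+\<omega>. ennreal (exp (- (a * (X t \<omega>)\<^sup>2))) \<partial>P)
    = ennreal (exp (- (a * x\<^sup>2) / (1 + 2 * a * t)) / sqrt (1 + 2 * a * t))"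
proof -
  have [measurable]: "X t \<in> borel_measurable P" "X 0 \<in> borel_measurable P"
    using brownian_motion_borel_measurable[OF bm] t by auto
  have "(\<integral>\<^sup>+z. ennreal (normal_density 0 (sqrt t) z) * ennreal (exp (- (a * (x + z)\<^sup>2))) \<partial>lborel)
      = (\<integral>\<^sup>+\<omega>. ennreal (exp (- (a * (x + (X t \<omega> - X 0 \<omega>))\<^sup>2))) \<partial>P)"
    by (rule distributed_nn_integral[OF brownian_motion_distributed[OF bm t]]) measurable
  also have "\<dots> = (\<integral>\<^sup>+\<omega>. ennreal (exp (- (a * (X t \<omega>)\<^sup>2))) \<partial>P)"
  proof (rule nn_integral_cong_AE)
    show "AE \<omega> in P. ennreal (exp (- (a * (x + (X t \<omega> - X 0 \<omega>))\<^sup>2))) = ennreal (exp (- (a * (X t \<omega>)\<^sup>2)))"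
      using brownian_motion_AE_start[OF bm] by eventually_elim simp
  qed
  finally show ?thesis
    using nn_integral_normal_density_mult_exp_neg_square[OF t a, of x] by simp
qed

lemma brownian3_nn_integral_exp_neg_square_norm:
  fixes P :: "'a measure" and B :: "nat \<Rightarrow> real \<Rightarrow> 'a \<Rightarrow> real"
  assumes "prob_space P"
    and bm0: "brownian_motion P (B 0) 1" and bm1: "brownian_motion P (B 1) 0"
    and bm2: "brownian_motion P (B 2) 0"
    and indep: "prob_space.indep_vars P (\<lambda>_. Pi\<^sub>M {0::real..} (\<lambda>_. borel))
      (\<lambda>i \<omega>. restrict (\<lambda>t. B i t \<omega>) {0..}) {0,1,2}"
    and t: "t > 0" and a: "a \<ge> 0"
  shows "(\<integral>\<^sup>+\<omega>. ennreal (exp (- (a * ((B 0 t \<omega>)\<^sup>2 + (B 1 t \<omega>)\<^sup>2 + (B 2 t \<omega>)\<^sup>2)))) \<partial>P)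
    = ennreal (exp (- a / (1 + 2 * a * t)) / sqrt (1 + 2 * a * t) ^ 3)"
proof -
  interpret prob_space P by fact
  define x :: "nat \<Rightarrow> real" where "x i = (if i = 0 then 1 else 0)" for i
  have bm: "brownian_motion P (B i) (x i)" if "i \<in> {0,1,2}" for i
    using that bm0 bm1 bm2 by (auto simp: x_def)
  have [measurable]: "B i t \<in> borel_measurable P" if "i \<in> {0,1,2}" for i
    using brownian_motion_borel_measurable[OF bm[OF that]] t by simp
  let ?E = "\<lambda>i \<omega>. ennreal (exp (- (a * (B i t \<omega>)\<^sup>2)))"
  have "indep_vars (\<lambda>_. borel)
      (\<lambda>i \<omega>. (\<lambda>f. ennreal (exp (- (a * (f t)\<^sup>2)))) (restrict (\<lambda>t. B i t \<omega>) {0..})) {0,1,2}"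
    by (rule indep_vars_compose2[OF indep], measurable) (use t in auto)
  moreover have "(\<lambda>i \<omega>. (\<lambda>f. ennreal (exp (- (a * (f t)\<^sup>2)))) (restrict (\<lambda>t. B i t \<omega>) {0..})) = ?E"
    using t by (auto simp: fun_eq_iff)
  ultimately have ind: "indep_vars (\<lambda>_. borel) ?E {0,1,2}" by simp
  have "(\<integral>\<^sup>+\<omega>. ennreal (exp (- (a * ((B 0 t \<omega>)\<^sup>2 + (B 1 t \<omega>)\<^sup>2 + (B 2 t \<omega>)\<^sup>2)))) \<partial>P)
      = (\<integral>\<^sup>+\<omega>. (\<Prod>i\<in>{0,1,2}. ?E i \<omega>) \<partial>P)"
    by (intro nn_integral_cong) (simp add: exp_add[symmetric] ennreal_mult[symmetric] distrib_left)
  also have "\<dots> = (\<Prod>i\<in>{0,1,2}. \<integral>\<^sup>+\<omega>. ?E i \<omega> \<partial>P)"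
    by (rule indep_vars_nn_integral[OF _ ind]) auto
  also have "\<dots> = (\<Prod>i\<in>{0,1,2::nat}. ennreal (exp (- (a * (x i)\<^sup>2) / (1 + 2 * a * t)) / sqrt (1 + 2 * a * t)))"
    using t a by (intro prod.cong refl brownian_motion_nn_integral_exp_neg_square bm) auto
  also have "\<dots> = ennreal (exp (- a / (1 + 2 * a * t)) / sqrt (1 + 2 * a * t) ^ 3)"
    using t a by (subst prod_ennreal) (auto simp: x_def power3_eq_cube mult_ac)
  finally show ?thesis .
qed

lemma brownian3_nn_integral_inverse_norm_less_1:
  fixes P :: "'a measure" and B :: "nat \<Rightarrow> real \<Rightarrow> 'a \<Rightarrow> real"
  assumes P: "prob_space P"
    and bm: "brownian_motion P (B 0) 1" "brownian_motion P (B 1) 0" "brownian_motion P (B 2) 0"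
    and indep: "prob_space.indep_vars P (\<lambda>_. Pi\<^sub>M {0::real..} (\<lambda>_. borel))
      (\<lambda>i \<omega>. restrict (\<lambda>t. B i t \<omega>) {0..}) {0,1,2}"
    and t: "t > 0"
  shows "(\<integral>\<^sup>+\<omega>. ennreal (1 / sqrt ((B 0 t \<omega>)\<^sup>2 + (B 1 t \<omega>)\<^sup>2 + (B 2 t \<omega>)\<^sup>2)) \<partial>P) < 1"
proof -
  interpret prob_space P by fact
  interpret pair_sigma_finite P lborel ..
  define S where "S \<omega> = (B 0 t \<omega>)\<^sup>2 + (B 1 t \<omega>)\<^sup>2 + (B 2 t \<omega>)\<^sup>2" for \<omega>
  have [measurable]: "B 0 t \<in> borel_measurable P" "B 1 t \<in> borel_measurable P" "B 2 t \<in> borel_measurable P"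
    using bm t by (auto intro: brownian_motion_borel_measurable)
  have [measurable]: "S \<in> borel_measurable P"
    unfolding S_def[abs_def] by measurable
  let ?F = "\<lambda>\<omega> s. ennreal (exp (- (s\<^sup>2 * S \<omega>))) * indicator {0..} s"
  \<comment> \<open>Only an inequality: where \<open>S\<close> vanishes the left side is the junk value \<open>1 / sqrt 0 = 0\<close>.\<close>
  have "ennreal (1 / sqrt (S \<omega>)) \<le> ennreal (2 / sqrt pi) * (\<integral>\<^sup>+s. ?F \<omega> s \<partial>lborel)" for \<omega>
  proof (cases "S \<omega> = 0")
    case False
    moreover have "S \<omega> \<ge> 0" by (simp add: S_def)
    ultimately show ?thesis
      using inverse_sqrt_eq_nn_integral_exp[of "S \<omega>"] by simp
  qed simp
  then have "(\<integral>\<^sup>+\<omega>. ennreal (1 / sqrt (S \<omega>)) \<partial>P)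
      \<le> (\<integral>\<^sup>+\<omega>. ennreal (2 / sqrt pi) * (\<integral>\<^sup>+s. ?F \<omega> s \<partial>lborel) \<partial>P)"
    by (intro nn_integral_mono)
  also have "\<dots> = ennreal (2 / sqrt pi) * (\<integral>\<^sup>+s. (\<integral>\<^sup>+\<omega>. ?F \<omega> s \<partial>P) \<partial>lborel)"
    by (subst nn_integral_cmult) (simp_all add: Fubini')
  also have "(\<lambda>s. \<integral>\<^sup>+\<omega>. ?F \<omega> s \<partial>P) = (\<lambda>s. ennreal (exp (- s\<^sup>2 / (1 + 2 * s\<^sup>2 * t))
      / sqrt (1 + 2 * s\<^sup>2 * t) ^ 3) * indicator {0..} s)"
    using brownian3_nn_integral_exp_neg_square_norm[OF P bm indep t]
    by (intro ext, subst nn_integral_multc, measurable, simp add: S_def)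
  also have "ennreal (2 / sqrt pi) * integral\<^sup>N lborel \<dots>
      = ennreal (2 / sqrt pi * (gauss_primitive (1 / sqrt (2 * t)) - gauss_primitive 0))"
    unfolding nn_integral_exp_neg_square_substitution[OF t] by (simp add: ennreal_mult'[symmetric])
  also have "\<dots> < 1"
    using gauss_primitive_diff_less[of "1 / sqrt (2 * t)"] t
    by (simp add: ennreal_less_iff field_simps)
  finally show ?thesis unfolding S_def .
qed

lemma brownian3_inverse_norm_start:
  fixes P :: "'a measure" and B :: "nat \<Rightarrow> real \<Rightarrow> 'a \<Rightarrow> real"
  assumes "prob_space P"
    and bm: "brownian_motion P (B 0) 1" "brownian_motion P (B 1) 0" "brownian_motion P (B 2) 0"
  shows "integrable P (\<lambda>\<omega>. 1 / sqrt ((B 0 0 \<omega>)\<^sup>2 + (B 1 0 \<omega>)\<^sup>2 + (B 2 0 \<omega>)\<^sup>2))"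
    and "(\<integral>\<omega>. 1 / sqrt ((B 0 0 \<omega>)\<^sup>2 + (B 1 0 \<omega>)\<^sup>2 + (B 2 0 \<omega>)\<^sup>2) \<partial>P) = 1"
proof -
  interpret prob_space P by fact
  have [measurable]: "B 0 0 \<in> borel_measurable P" "B 1 0 \<in> borel_measurable P" "B 2 0 \<in> borel_measurable P"
    using bm by (auto intro: brownian_motion_borel_measurable)
  let ?R = "\<lambda>\<omega>. 1 / sqrt ((B 0 0 \<omega>)\<^sup>2 + (B 1 0 \<omega>)\<^sup>2 + (B 2 0 \<omega>)\<^sup>2)"
  have R: "?R \<in> borel_measurable P" by measurable
  have ae: "AE \<omega> in P. ?R \<omega> = 1"
    using brownian_motion_AE_start[OF bm(1)] brownian_motion_AE_start[OF bm(2)]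
      brownian_motion_AE_start[OF bm(3)]
    by eventually_elim simp
  show "integrable P ?R"
    using integrable_cong_AE[OF R borel_measurable_const ae] by simp
  show "(\<integral>\<omega>. ?R \<omega> \<partial>P) = 1"
    using integral_cong_AE[OF R borel_measurable_const ae] by (simp add: prob_space)
qed

lemma brownian3_inverse_norm_expectation_less_1:
  fixes P :: "'a measure" and B :: "nat \<Rightarrow> real \<Rightarrow> 'a \<Rightarrow> real"
  assumes P: "prob_space P"
    and bm: "brownian_motion P (B 0) 1" "brownian_motion P (B 1) 0" "brownian_motion P (B 2) 0"
    and indep: "prob_space.indep_vars P (\<lambda>_. Pi\<^sub>M {0::real..} (\<lambda>_. borel))
      (\<lambda>i \<omega>. restrict (\<lambda>t. B i t \<omega>) {0..}) {0,1,2}"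
    and t: "t > 0"
  shows "integrable P (\<lambda>\<omega>. 1 / sqrt ((B 0 t \<omega>)\<^sup>2 + (B 1 t \<omega>)\<^sup>2 + (B 2 t \<omega>)\<^sup>2))"
    and "(\<integral>\<omega>. 1 / sqrt ((B 0 t \<omega>)\<^sup>2 + (B 1 t \<omega>)\<^sup>2 + (B 2 t \<omega>)\<^sup>2) \<partial>P) < 1"
proof -
  have [measurable]: "B 0 t \<in> borel_measurable P" "B 1 t \<in> borel_measurable P" "B 2 t \<in> borel_measurable P"
    using bm t by (auto intro: brownian_motion_borel_measurable)
  let ?R = "\<lambda>\<omega>. 1 / sqrt ((B 0 t \<omega>)\<^sup>2 + (B 1 t \<omega>)\<^sup>2 + (B 2 t \<omega>)\<^sup>2)"
  have "?R \<in> borel_measurable P" by measurable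
  note less_1 = brownian3_nn_integral_inverse_norm_less_1[OF P bm indep t]
  show int: "integrable P ?R"
    using less_1 \<open>?R \<in> borel_measurable P\<close>
    by (intro integrableI_nonneg) (auto simp: top.not_eq_extremum intro: order.strict_trans)
  show "(\<integral>\<omega>. ?R \<omega> \<partial>P) < 1"
    using less_1 nn_integral_eq_integral[OF int] by (simp add: ennreal_less_iff)
qed

section \<open>Almost trivial \<open>\<sigma>\<close>-algebras and local martingales\<close>

definition almost_trivial :: "'a measure \<Rightarrow> 'a measure \<Rightarrow> bool" where
  "almost_trivial M F \<longleftrightarrow> (\<forall>A\<in>sets F. A \<in> null_sets M \<or> space M - A \<in> null_sets M)"

lemma real_cond_exp_almost_trivial:
  assumes "prob_space P" "subalgebra P F" and triv: "almost_trivial P F" and f: "integrable P f"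
  shows "AE x in P. real_cond_exp P F f x = (\<integral>x. f x \<partial>P)"
proof -
  interpret prob_space P by fact
  interpret finite_measure_subalgebra P F by unfold_locales fact
  show ?thesis
  proof (rule real_cond_exp_charact)
    fix A
    assume A: "A \<in> sets F"
    then have AP: "A \<in> sets P" using assms(2) by (auto simp: subalgebra_def)
    from A triv have "A \<in> null_sets P \<or> space P - A \<in> null_sets P"
      unfolding almost_trivial_def by blast
    then show "(\<integral>x\<in>A. f x \<partial>P) = (\<integral>x\<in>A. (\<integral>x. f x \<partial>P) \<partial>P)"
    proof
      assume "A \<in> null_sets P"
      from AE_not_in[OF this] have "AE x in P. indicator A x = (0::real)"
        by eventually_elim simp
      then show ?thesis
        unfolding set_lebesgue_integral_def by (subst (1 2) integral_eq_zero_AE) auto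
    next
      assume "space P - A \<in> null_sets P"
      from AE_not_in[OF this] AE_space have "AE x in P. indicator A x = (1::real)"
        by eventually_elim simp
      then have "(\<integral>x\<in>A. g x \<partial>P) = (\<integral>x. g x \<partial>P)" if "g \<in> borel_measurable P" for g :: "'a \<Rightarrow> real"
        unfolding set_lebesgue_integral_def using that AP by (intro integral_cong_AE) auto
      then show ?thesis using f by (simp add: prob_space)
    qed
  qed (use f in auto)
qed

lemma almost_trivial_equiv_prob_on:
  assumes eqv: "equiv_prob_on Q P H" and sub: "sets F \<subseteq> sets H" and triv: "almost_trivial P F"
  shows "almost_trivial Q F"
  unfolding almost_trivial_def
proof
  fix A
  assume A: "A \<in> sets F"
  have spaces: "space Q = space P" "sets Q = sets H"
    using eqv unfolding equiv_prob_on_def by auto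
  then have "A \<in> sets H" "space P - A \<in> sets H"
    using A sub sets.compl_sets[of A Q] by auto
  moreover have "A \<in> null_sets P \<or> space P - A \<in> null_sets P"
    using A triv unfolding almost_trivial_def by blast
  ultimately show "A \<in> null_sets Q \<or> space Q - A \<in> null_sets Q"
    using eqv spaces unfolding equiv_prob_on_def null_sets_def by auto
qed

lemma AE_equiv_prob_on:
  assumes eqv: "equiv_prob_on Q P H" and null: "null_sets P \<subseteq> sets H" and "AE x in P. R x"
  shows "AE x in Q. R x"
proof -
  obtain N where N: "{x \<in> space P. \<not> R x} \<subseteq> N" "N \<in> null_sets P"
    using assms(3) by (auto elim!: AE_E simp: null_sets_def)
  then have "N \<in> null_sets Q"
    using eqv null unfolding equiv_prob_on_def null_sets_def by auto
  then show ?thesis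
    using N eqv unfolding equiv_prob_on_def by (intro AE_I[of _ _ N]) auto
qed

lemma sets_subset_filtration_infty:
  assumes "\<And>t. space (G t) = space P"
  shows "sets (G t) \<subseteq> sets (filtration_infty P G)"
proof -
  have "(\<Union>t. sets (G t)) \<subseteq> Pow (space P)"
    using sets.sets_into_space assms by blast
  then show ?thesis
    unfolding filtration_infty_def by (auto simp: sets_measure_of)
qed

lemma
  shows space_aug_nat_filtration [simp]: "space (aug_nat_filtration P Y t) = space P"
    and sets_aug_nat_filtration: "sets (aug_nat_filtration P Y t) = sigma_sets (space P)
      ({Y s -` A \<inter> space P | s A. 0 \<le> s \<and> s \<le> max t 0 \<and> A \<in> sets borel} \<union> null_sets P)"
proof -
  have "{Y s -` A \<inter> space P | s A. 0 \<le> s \<and> s \<le> max t 0 \<and> A \<in> sets borel} \<union> null_sets P \<subseteq> Pow (space P)"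
    using null_sets.sets_into_space by auto
  then show "space (aug_nat_filtration P Y t) = space P" "sets (aug_nat_filtration P Y t) = sigma_sets (space P)
      ({Y s -` A \<inter> space P | s A. 0 \<le> s \<and> s \<le> max t 0 \<and> A \<in> sets borel} \<union> null_sets P)"
    unfolding aug_nat_filtration_def by (simp_all add: space_measure_of_conv sets_measure_of)
qed

lemma null_sets_subset_aug_nat_filtration: "null_sets P \<subseteq> sets (aug_nat_filtration P Y t)"
  unfolding sets_aug_nat_filtration by auto

lemma aug_nat_filtration_nonpos: "t \<le> 0 \<Longrightarrow> aug_nat_filtration P Y t = aug_nat_filtration P Y 0"
  unfolding aug_nat_filtration_def by (simp add: max_def)

lemma aug_nat_filtration_0_almost_trivial:
  assumes Y0: "\<And>\<omega>. Y 0 \<omega> = c"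
  shows "subalgebra P (aug_nat_filtration P Y 0)" and "almost_trivial P (aug_nat_filtration P Y 0)"
proof -
  let ?T = "{A \<in> sets P. A \<in> null_sets P \<or> space P - A \<in> null_sets P}"
  have "X \<in> ?T" if "X \<in> sets (aug_nat_filtration P Y 0)" for X
    using that unfolding sets_aug_nat_filtration
  proof induct
    case (Basic a)
    then show ?case
    proof
      assume "a \<in> {Y s -` A \<inter> space P | s A. 0 \<le> s \<and> s \<le> max 0 0 \<and> A \<in> sets borel}"
      then obtain A where "a = Y 0 -` A \<inter> space P" by auto
      then have "a = {} \<or> a = space P" using Y0 by (cases "c \<in> A") auto
      then show ?case by auto
    qed auto
  next
    case (Compl a)
    have "space P - (space P - a) = a" using Compl sets.sets_into_space by auto
    then show ?case using Compl by auto
  next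
    case (Union a)
    show ?case
    proof (cases "\<exists>i. space P - a i \<in> null_sets P")
      case True
      then obtain i where "space P - a i \<in> null_sets P" by auto
      then have "space P - (\<Union>i. a i) \<in> null_sets P"
        by (rule null_sets_subset) (use Union in auto)
      then show ?thesis using Union by auto
    next
      case False
      then show ?thesis using Union by auto
    qed
  qed simp
  then show "subalgebra P (aug_nat_filtration P Y 0)" "almost_trivial P (aug_nat_filtration P Y 0)"
    unfolding subalgebra_def almost_trivial_def by auto
qed

lemma stopping_time_almost_trivial:
  assumes "stopping_time F \<tau>" "subalgebra Q (F t)" "almost_trivial Q (F t)"
  shows "(AE \<omega> in Q. t < \<tau> \<omega>) \<or> (AE \<omega> in Q. \<tau> \<omega> \<le> t)"
proof -
  have "{\<omega> \<in> space Q. \<tau> \<omega> \<le> t} \<in> sets (F t)"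
    using assms(1,2) unfolding stopping_time_def pred_def subalgebra_def by metis
  then have "{\<omega> \<in> space Q. \<tau> \<omega> \<le> t} \<in> null_sets Q \<or> space Q - {\<omega> \<in> space Q. \<tau> \<omega> \<le> t} \<in> null_sets Q"
    using assms(3) unfolding almost_trivial_def by blast
  then show ?thesis
  proof
    assume "{\<omega> \<in> space Q. \<tau> \<omega> \<le> t} \<in> null_sets Q"
    from AE_not_in[OF this] AE_space have "AE \<omega> in Q. t < \<tau> \<omega>"
      by eventually_elim auto
    then show ?thesis ..
  next
    assume "space Q - {\<omega> \<in> space Q. \<tau> \<omega> \<le> t} \<in> null_sets Q"
    from AE_not_in[OF this] AE_space have "AE \<omega> in Q. \<tau> \<omega> \<le> t"
      by eventually_elim auto
    then show ?thesis ..
  qed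
qed

lemma optional_projection_almost_trivial:
  assumes "prob_space P" "optional_projection P F X Y" "0 \<le> t"
    and "subalgebra P (F t)" "almost_trivial P (F t)" "integrable P (X t)"
  shows "AE \<omega> in P. Y t \<omega> = (\<integral>\<omega>. X t \<omega> \<partial>P)"
proof -
  have "AE \<omega> in P. Y t \<omega> = real_cond_exp P (F t) (X t) \<omega>"
    using assms(2,3) unfolding optional_projection_def by blast
  with real_cond_exp_almost_trivial[OF assms(1,4-6)] show ?thesis
    by eventually_elim simp
qed

lemma localizing_sequence_exceeds:
  fixes t :: real
  assumes "prob_space Q" "\<And>n. stopping_time F (\<tau> n)"
    and "subalgebra Q (F t)" "almost_trivial Q (F t)"
    and "AE \<omega> in Q. filterlim (\<lambda>n. \<tau> n \<omega>) at_top sequentially"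
  shows "\<exists>n. AE \<omega> in Q. t < \<tau> n \<omega>"
proof (rule ccontr)
  interpret prob_space Q by fact
  assume "\<nexists>n. AE \<omega> in Q. t < \<tau> n \<omega>"
  then have "AE \<omega> in Q. \<tau> n \<omega> \<le> t" for n
    using stopping_time_almost_trivial[OF assms(2-4)] by blast
  then have "AE \<omega> in Q. \<forall>n. \<tau> n \<omega> \<le> t"
    by (simp add: AE_all_countable)
  with assms(5) have "AE \<omega> in Q. False"
  proof eventually_elim
    case (elim \<omega>)
    then have "eventually (\<lambda>n. t + 1 \<le> \<tau> n \<omega>) sequentially"
      by (simp add: filterlim_at_top)
    then obtain n where "t + 1 \<le> \<tau> n \<omega>"
      by (auto simp: eventually_sequentially)
    moreover have "\<tau> n \<omega> \<le> t"
      using elim by blast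
    ultimately show False by linarith
  qed
  then show False by simp
qed

text \<open>Some localising time exceeds \<open>t\<close> almost surely, and the martingale stopped there agrees
  with \<open>Y\<close> at \<open>s\<close> and at \<open>t\<close>.\<close>

lemma local_martingale_almost_trivial_const_eq:
  assumes Q: "prob_space Q" and lm: "is_local_martingale Q F Y"
    and "0 \<le> s" "s \<le> t"
    and sub: "subalgebra Q (F s)" "subalgebra Q (F t)" and triv: "almost_trivial Q (F t)"
    and Ys: "AE \<omega> in Q. Y s \<omega> = a" and Yt: "AE \<omega> in Q. Y t \<omega> = b"
  shows "a = b"
proof -
  interpret prob_space Q by fact
  obtain \<tau> where st: "\<And>n. stopping_time F (\<tau> n)"
    and lim: "AE \<omega> in Q. filterlim (\<lambda>n. \<tau> n \<omega>) at_top sequentially"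
    and mart: "\<And>n. is_martingale Q F (\<lambda>r \<omega>. Y (min r (\<tau> n \<omega>)) \<omega>)"
    using lm unfolding is_local_martingale_def by (auto elim!: eventually_mono)
  obtain n where n: "AE \<omega> in Q. t < \<tau> n \<omega>"
    using localizing_sequence_exceeds[OF Q st sub(2) triv lim] by blast
  define X where "X r \<omega> = Y (min r (\<tau> n \<omega>)) \<omega>" for r \<omega>
  have Xs: "X s \<in> borel_measurable (F s)" and Xt: "X t \<in> borel_measurable (F t)"
    using mart[of n] \<open>0 \<le> s\<close> \<open>s \<le> t\<close> unfolding is_martingale_def X_def by auto
  note measurable_from_subalg[OF sub(1) Xs, measurable] measurable_from_subalg[OF sub(2) Xt, measurable]
  have "space Q \<in> sets (F s)"
    using sub(1) sets.top[of "F s"] by (simp add: subalgebra_def)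
  then have "(\<integral>\<omega>. indicator (space Q) \<omega> * X t \<omega> \<partial>Q) = (\<integral>\<omega>. indicator (space Q) \<omega> * X s \<omega> \<partial>Q)"
    using mart[of n] \<open>0 \<le> s\<close> \<open>s \<le> t\<close> unfolding is_martingale_def X_def by blast
  moreover have "AE \<omega> in Q. indicator (space Q) \<omega> * X s \<omega> = a"
    using AE_space n Ys by eventually_elim (use \<open>s \<le> t\<close> in \<open>auto simp: X_def min_def\<close>)
  then have "(\<integral>\<omega>. indicator (space Q) \<omega> * X s \<omega> \<partial>Q) = (\<integral>\<omega>. a \<partial>Q)"
    by (intro integral_cong_AE) measurable
  moreover have "AE \<omega> in Q. indicator (space Q) \<omega> * X t \<omega> = b"
    using AE_space n Yt by eventually_elim (auto simp: X_def min_def)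
  then have "(\<integral>\<omega>. indicator (space Q) \<omega> * X t \<omega> \<partial>Q) = (\<integral>\<omega>. b \<partial>Q)"
    by (intro integral_cong_AE) measurable
  ultimately show ?thesis by (simp add: prob_space)
qed

lemma optional_projection_not_local_martingale:
  assumes P: "prob_space P" and proj: "optional_projection P F X Y" and "0 \<le> t"
    and F0: "F 0 = H" and Ft: "F t = H"
    and H: "subalgebra P H" "almost_trivial P H" "null_sets P \<subseteq> sets H" "sets H \<subseteq> sets K"
    and X: "integrable P (X 0)" "integrable P (X t)" "(\<integral>\<omega>. X 0 \<omega> \<partial>P) \<noteq> (\<integral>\<omega>. X t \<omega> \<partial>P)"
    and eqv: "equiv_prob_on Q P K"
  shows "\<not> is_local_martingale Q F Y"
proof
  assume lm: "is_local_martingale Q F Y"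
  have QP: "prob_space Q" "space Q = space P" "sets Q = sets K"
    using eqv unfolding equiv_prob_on_def by auto
  have Q: "subalgebra Q H" "almost_trivial Q H"
    using QP H(1,4) almost_trivial_equiv_prob_on[OF eqv H(4) H(2)] by (simp_all add: subalgebra_def)
  have null: "null_sets P \<subseteq> sets K"
    using H(3,4) by (rule order.trans)
  have "AE \<omega> in P. Y 0 \<omega> = (\<integral>\<omega>. X 0 \<omega> \<partial>P)"
    using optional_projection_almost_trivial[OF P proj order_refl] H(1,2) X(1) by (simp add: F0)
  note Y0 = AE_equiv_prob_on[OF eqv null this]
  have "AE \<omega> in P. Y t \<omega> = (\<integral>\<omega>. X t \<omega> \<partial>P)"
    using optional_projection_almost_trivial[OF P proj \<open>0 \<le> t\<close>] H(1,2) X(2) by (simp add: Ft)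
  note Yt = AE_equiv_prob_on[OF eqv null this]
  have "(\<integral>\<omega>. X 0 \<omega> \<partial>P) = (\<integral>\<omega>. X t \<omega> \<partial>P)"
    using local_martingale_almost_trivial_const_eq[OF QP(1) lm order_refl \<open>0 \<le> t\<close> _ _ _ Y0 Yt] Q
    by (simp add: F0 Ft)
  with X(3) show False ..
qed

theorem mainTheorem12:
  fixes P :: "'a measure" and B :: "nat \<Rightarrow> real \<Rightarrow> 'a \<Rightarrow> real"
    and M W Y :: "real \<Rightarrow> 'a \<Rightarrow> real"
    and G F :: "real \<Rightarrow> 'a measure" and \<epsilon> :: real
  assumes "prob_space P"
    and "brownian_motion P (B 0) 1" and "brownian_motion P (B 1) 0" and "brownian_motion P (B 2) 0"
    and "prob_space.indep_vars P (\<lambda>_. Pi\<^sub>M {0::real..} (\<lambda>_. borel)) (\<lambda>i \<omega>. restrict (\<lambda>t. B i t \<omega>) {0..}) {0,1,2}"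
    and M_def: "\<And>t \<omega>. M t \<omega> = 1 / sqrt ((B 0 t \<omega>)\<^sup>2 + (B 1 t \<omega>)\<^sup>2 + (B 2 t \<omega>)\<^sup>2)"
    and W_def: "\<And>t \<omega>. W t \<omega> = sqrt ((B 0 t \<omega>)\<^sup>2 + (B 1 t \<omega>)\<^sup>2 + (B 2 t \<omega>)\<^sup>2)
                          - sqrt ((B 0 0 \<omega>)\<^sup>2 + (B 1 0 \<omega>)\<^sup>2 + (B 2 0 \<omega>)\<^sup>2) - (LBINT s:{0..t}. M s \<omega>)"
    and G_def: "G = aug_nat_filtration P W"
    and "\<epsilon> > 0"
    and F_def: "\<And>t. F t = G (t - \<epsilon>)"
    and "optional_projection P F M Y"
  shows "\<not> (\<exists>Q. equiv_prob_on Q P (filtration_infty P G) \<and> is_local_martingale Q F Y)"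
proof
  assume "\<exists>Q. equiv_prob_on Q P (filtration_infty P G) \<and> is_local_martingale Q F Y"
  then obtain Q where eqv: "equiv_prob_on Q P (filtration_infty P G)" and lm: "is_local_martingale Q F Y"
    by blast
  have "(LBINT s:{0..0::real}. M s \<omega>) = 0" for \<omega>
    unfolding set_lebesgue_integral_def
    by (rule integral_eq_zero_AE) (use AE_lborel_singleton[of 0] in \<open>auto elim!: eventually_mono\<close>)
  then have "W 0 \<omega> = 0" for \<omega>
    by (simp add: W_def)
  then have G0: "subalgebra P (G 0)" "almost_trivial P (G 0)"
    unfolding G_def by (rule aug_nat_filtration_0_almost_trivial)+
  have F: "F 0 = G 0" "F \<epsilon> = G 0"
    using aug_nat_filtration_nonpos[of "- \<epsilon>" P W] \<open>\<epsilon> > 0\<close> by (simp_all add: F_def G_def)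
  have G_sets: "null_sets P \<subseteq> sets (G 0)" "sets (G 0) \<subseteq> sets (filtration_infty P G)"
    using null_sets_subset_aug_nat_filtration sets_subset_filtration_infty[of G P] by (auto simp: G_def)
  have "M t = (\<lambda>\<omega>. 1 / sqrt ((B 0 t \<omega>)\<^sup>2 + (B 1 t \<omega>)\<^sup>2 + (B 2 t \<omega>)\<^sup>2))" for t
    by (simp add: M_def fun_eq_iff)
  note M0 = brownian3_inverse_norm_start[OF assms(1-4), folded this]
    and M\<epsilon> = brownian3_inverse_norm_expectation_less_1[OF assms(1-5) \<open>\<epsilon> > 0\<close>, folded this]
  have "(\<integral>\<omega>. M 0 \<omega> \<partial>P) \<noteq> (\<integral>\<omega>. M \<epsilon> \<omega> \<partial>P)"
    using M0(2) M\<epsilon>(2) by simp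
  with optional_projection_not_local_martingale[OF assms(1) \<open>optional_projection P F M Y\<close>
      less_imp_le[OF \<open>\<epsilon> > 0\<close>] F G0 G_sets M0(1) M\<epsilon>(1)] eqv lm
  show False by blast
qed

end
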